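(* Let $S=(P,L)$ be a finite $(2,t)$-generalized quadrangle and let $(R,\psi)$ be a faithful representation of $S$ with $\psi(x)=\langle r_x\rangle$. Let $a,b\in P$ be distinct non-collinear points. Set $A=\{r_ar_x: x\in P,\ x\neq a,\ x \text{ not collinear with } a\}$ and $B=\{r_br_x: x\in P,\ x\neq b,\ x\text{ not collinear with } b\}$. Then $|A\cap B|=t+2$.
   Context: A $(2,t)$-generalized quadrangle is a partial linear space in which every line has exactly $3$ points, every point lies on exactly $t+1$ lines, no point is collinear with all points, and for every point $x$ and line $\ell$ with $x\notin\ell$, $x$ is collinear with exactly one point of $\ell$. A representation $(R,\psi)$ of $S$ is a group $R$ with a map $\psi$ assigning to each point $x$ a subgroup $\psi(x)=\langle r_x\rangle$ of order $2$, such that $R$ is generated by the $r_x$ and, for every line $\{x,y,z\}$, $\{1,r_x,r_y,r_z\}$ is a Klein four subgroup. It is faithful if $\psi$ is injective. *)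

theory Defs
  imports "HOL-Algebra.Algebra"
begin

definition collinear :: "'p set set \<Rightarrow> 'p \<Rightarrow> 'p \<Rightarrow> bool" where
  "collinear L x y \<longleftrightarrow> (\<exists>l\<in>L. x \<in> l \<and> y \<in> l)"

definition gen_quadrangle_2 :: "'p set \<Rightarrow> 'p set set \<Rightarrow> nat \<Rightarrow> bool" where
  "gen_quadrangle_2 P L t \<longleftrightarrow>
     \<comment> \<open>partial linear space with three points per line\<close>
     (\<forall>l\<in>L. l \<subseteq> P \<and> card l = 3) \<and>
     (\<forall>l1\<in>L. \<forall>l2\<in>L. l1 \<noteq> l2 \<longrightarrow> card (l1 \<inter> l2) \<le> 1) \<and>
     \<comment> \<open>every point on exactly t+1 lines\<close>
     (\<forall>x\<in>P. card {l\<in>L. x \<in> l} = t + 1) \<and>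
     \<comment> \<open>no point is collinear with all points\<close>
     (\<forall>x\<in>P. \<exists>y\<in>P. \<not> collinear L x y) \<and>
     \<comment> \<open>GQ axiom\<close>
     (\<forall>x\<in>P. \<forall>l\<in>L. x \<notin> l \<longrightarrow> card {y\<in>l. collinear L x y} = 1)"

definition klein_four_subgroup :: "('g, 'b) monoid_scheme \<Rightarrow> 'g set \<Rightarrow> bool" where
  "klein_four_subgroup G H \<longleftrightarrow>
     subgroup H G \<and> card H = 4 \<and> (\<forall>h\<in>H. h \<otimes>\<^bsub>G\<^esub> h = \<one>\<^bsub>G\<^esub>)"

text \<open>A representation: r x is the generator of psi(x) = <r x>, of order 2.\<close>
definition representation ::
    "'p set \<Rightarrow> 'p set set \<Rightarrow> ('g, 'b) monoid_scheme \<Rightarrow> ('p \<Rightarrow> 'g) \<Rightarrow> bool" where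
  "representation P L G r \<longleftrightarrow>
     group G \<and>
     (\<forall>x\<in>P. r x \<in> carrier G \<and> group.ord G (r x) = 2) \<and>
     generate G (r ` P) = carrier G \<and>
     (\<forall>l\<in>L. klein_four_subgroup G (insert \<one>\<^bsub>G\<^esub> (r ` l)))"

definition rep_psi :: "('g, 'b) monoid_scheme \<Rightarrow> ('p \<Rightarrow> 'g) \<Rightarrow> 'p \<Rightarrow> 'g set" where
  "rep_psi G r x = generate G {r x}"

definition faithful_representation ::
    "'p set \<Rightarrow> 'p set set \<Rightarrow> ('g, 'b) monoid_scheme \<Rightarrow> ('p \<Rightarrow> 'g) \<Rightarrow> bool" where
  "faithful_representation P L G r \<longleftrightarrow>
     representation P L G r \<and> inj_on (rep_psi G r) P"

end

theory Submission
  imports Defs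
begin

(*
  Points u, v, w of a line span a Klein four-group, so r u r v = r w and r u, r v commute.
  Generators of non-collinear points a, b commute as well: for common neighbours c, d of a and b,
  the third points a1, b1, a2, b2 of the lines ac, bc, ad, bd lie on two lines a2 b1 and a1 b2
  through one point e, and the equalities r a2 r b1 = r b1 r a2 = r a1 r b2 (all equal to r e)
  give r a r b = r b r a.
  Hence R is an elementary abelian 2-group.

  The heart of the proof is that no four pairwise non-collinear points satisfy r a r b = r x r y.
  Every common neighbour of a and b would be collinear with x and y; moving a and b to the third
  points of their lines through one such neighbour gives a second quadruple of this kind and
  hence a point e collinear with x and y but not with a or b. The third point f of the line xe
  is then a common neighbour of a and b, so y is collinear with the two points e, f of that line
  and hence y = x.

  Consequently r a r x = r b r y, with x not collinear with a and y not collinear with b, forces x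
  to be collinear with b, and conversely every such x occurs. These x are b and one point on each
  of the t + 1 lines through b, and x |-> r a r x is injective because the representation is
  faithful.
*)

lemma (in group) commute_generate:
  assumes "S \<subseteq> carrier G" "g \<in> carrier G" "\<And>s. s \<in> S \<Longrightarrow> g \<otimes> s = s \<otimes> g"
    and "h \<in> generate G S"
  shows "g \<otimes> h = h \<otimes> g"
  using assms(4)
proof (induction rule: generate.induct)
  case one
  show ?case
    using assms(2) by simp
next
  case (incl h)
  then show ?case
    using assms(3) by blast
next
  case (inv h)
  then have h: "h \<in> carrier G" "g \<otimes> h = h \<otimes> g"
    using assms(1,3) by blast+
  have "inv h \<otimes> g = inv h \<otimes> (g \<otimes> h) \<otimes> inv h"
    using h(1) assms(2) by (simp add: m_assoc)
  also have "\<dots> = g \<otimes> inv h"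
    using h assms(2) by (simp add: m_assoc [symmetric])
  finally show ?case
    by simp
next
  case (eng h1 h2)
  have "h1 \<in> carrier G" "h2 \<in> carrier G"
    using eng.hyps assms(1) generate_in_carrier by blast+
  then show ?case
    using assms(2) eng.IH by (metis m_assoc)
qed

lemma (in group) comm_group_if_generators_commute:
  assumes "generate G S = carrier G" "S \<subseteq> carrier G"
    and "\<And>s s'. s \<in> S \<Longrightarrow> s' \<in> S \<Longrightarrow> s \<otimes> s' = s' \<otimes> s"
  shows "comm_group G"
proof (rule group_comm_groupI)
  fix x y
  assume "x \<in> carrier G" "y \<in> carrier G"
  have "x \<otimes> s = s \<otimes> x" if "s \<in> S" for s
  proof -
    have "s \<in> carrier G" "\<And>s'. s' \<in> S \<Longrightarrow> s \<otimes> s' = s' \<otimes> s"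
      using that assms(2,3) by blast+
    then show ?thesis
      using commute_generate[OF assms(2)] assms(1) \<open>x \<in> carrier G\<close> by metis
  qed
  then show "x \<otimes> y = y \<otimes> x"
    using commute_generate[of S x y] assms \<open>x \<in> carrier G\<close> \<open>y \<in> carrier G\<close> by blast
qed

lemma (in group) commute_from_products:
  assumes carrier: "a \<in> carrier G" "b \<in> carrier G" "c \<in> carrier G" "d \<in> carrier G"
    and ac: "a \<otimes> c = c \<otimes> a" and bc: "b \<otimes> c = c \<otimes> b" and bd: "b \<otimes> d = d \<otimes> b"
    and eq1: "a \<otimes> d \<otimes> (b \<otimes> c) = a \<otimes> c \<otimes> (b \<otimes> d)"
    and eq2: "a \<otimes> d \<otimes> (b \<otimes> c) = b \<otimes> c \<otimes> (a \<otimes> d)"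
  shows "a \<otimes> b = b \<otimes> a"
proof -
  have adbc: "a \<otimes> d \<otimes> (b \<otimes> c) = a \<otimes> ((b \<otimes> d) \<otimes> c)"
    using carrier by (simp add: m_assoc bd)
  have dc: "d \<otimes> c = c \<otimes> d"
  proof -
    have "a \<otimes> (b \<otimes> (d \<otimes> c)) = a \<otimes> d \<otimes> (b \<otimes> c)"
      unfolding adbc using carrier by (simp add: m_assoc)
    also have "\<dots> = a \<otimes> ((c \<otimes> b) \<otimes> d)"
      unfolding eq1 using carrier by (simp add: m_assoc)
    also have "\<dots> = a \<otimes> (b \<otimes> (c \<otimes> d))"
      using carrier by (simp add: m_assoc bc [symmetric])
    finally show ?thesis
      using carrier by simp
  qed
  have "a \<otimes> b \<otimes> (d \<otimes> c) = a \<otimes> d \<otimes> (b \<otimes> c)"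
    unfolding adbc using carrier by (simp add: m_assoc)
  also have "\<dots> = b \<otimes> ((c \<otimes> a) \<otimes> d)"
    unfolding eq2 using carrier by (simp add: m_assoc)
  also have "\<dots> = b \<otimes> a \<otimes> (d \<otimes> c)"
    using carrier by (simp add: m_assoc ac [symmetric] dc)
  finally show ?thesis
    using carrier by simp
qed

locale gq2 =
  fixes P :: "'p set" and L :: "'p set set" and t :: nat
  assumes gq: "gen_quadrangle_2 P L t"
begin

abbreviation coll :: "'p \<Rightarrow> 'p \<Rightarrow> bool" where
  "coll \<equiv> collinear L"

definition line3 :: "'p \<Rightarrow> 'p \<Rightarrow> 'p \<Rightarrow> bool" where
  "line3 u v w \<longleftrightarrow> {u, v, w} \<in> L \<and> u \<noteq> v \<and> v \<noteq> w \<and> u \<noteq> w"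

lemma line_subset: "l \<in> L \<Longrightarrow> l \<subseteq> P"
  and card_line: "l \<in> L \<Longrightarrow> card l = 3"
  and card_lines_through: "x \<in> P \<Longrightarrow> card {l\<in>L. x \<in> l} = t + 1"
  and ex_not_collinear: "x \<in> P \<Longrightarrow> \<exists>y\<in>P. \<not> coll x y"
  and card_collinear_on_line: "x \<in> P \<Longrightarrow> l \<in> L \<Longrightarrow> x \<notin> l \<Longrightarrow> card {y\<in>l. coll x y} = 1"
  using gq unfolding gen_quadrangle_2_def by blast+

lemma finite_line: "l \<in> L \<Longrightarrow> finite l"
  using card_line by (metis card.infinite zero_neq_numeral)

lemma finite_lines_through: "x \<in> P \<Longrightarrow> finite {l\<in>L. x \<in> l}"
  by (intro card_ge_0_finite) (simp add: card_lines_through)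

lemma collinear_sym: "coll x y \<longleftrightarrow> coll y x"
  unfolding collinear_def by blast

lemma collinear_in_P: "coll x y \<Longrightarrow> x \<in> P \<and> y \<in> P"
  unfolding collinear_def using line_subset by blast

lemma ex_line_through: "x \<in> P \<Longrightarrow> \<exists>l\<in>L. x \<in> l"
  using card_lines_through[of x]
  by (metis (no_types, lifting) Collect_empty_eq card.empty add_is_0 one_neq_zero)

lemma collinear_refl: "x \<in> P \<Longrightarrow> coll x x"
  using ex_line_through unfolding collinear_def by blast

lemma line_unique:
  assumes "l \<in> L" "l' \<in> L" "p \<in> l \<inter> l'" "q \<in> l \<inter> l'" "p \<noteq> q"
  shows "l = l'"
proof (rule ccontr)
  assume "l \<noteq> l'"
  then have "card (l \<inter> l') \<le> 1"
    using gq assms(1,2) unfolding gen_quadrangle_2_def by blast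
  moreover have "card {p, q} \<le> card (l \<inter> l')"
    using assms finite_line by (intro card_mono) auto
  ultimately show False
    using assms(5) by simp
qed

lemma line_through_point:
  assumes "l \<in> L" "u \<in> l"
  shows "\<exists>v w. l = {u, v, w} \<and> line3 u v w"
proof -
  have "card (l - {u}) = 2"
    using assms card_line finite_line by simp
  then obtain v w where "l - {u} = {v, w}" "v \<noteq> w"
    by (auto simp: card_2_iff)
  then have "l = {u, v, w}" "u \<noteq> v" "u \<noteq> w"
    using assms(2) by blast+
  with assms(1) \<open>v \<noteq> w\<close> show ?thesis
    unfolding line3_def by blast
qed

lemma line3_perms:
  assumes "line3 u v w"
  shows "line3 v u w" "line3 u w v" "line3 w v u" "line3 v w u" "line3 w u v"
proof -
  have "{v, u, w} = {u, v, w}" "{u, w, v} = {u, v, w}" "{w, v, u} = {u, v, w}"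
    "{v, w, u} = {u, v, w}" "{w, u, v} = {u, v, w}"
    by blast+
  with assms show "line3 v u w" "line3 u w v" "line3 w v u" "line3 v w u" "line3 w u v"
    unfolding line3_def by auto
qed

lemma collinear_if_on_line: "l \<in> L \<Longrightarrow> x \<in> l \<Longrightarrow> y \<in> l \<Longrightarrow> coll x y"
  unfolding collinear_def by blast

lemma line3_collinear:
  assumes "line3 u v w"
  shows "coll u v" "coll v u" "coll u w" "coll w u" "coll v w" "coll w v"
  using assms collinear_if_on_line[of "{u, v, w}"] unfolding line3_def by simp_all

lemma line3_in_P: "line3 u v w \<Longrightarrow> u \<in> P \<and> v \<in> P \<and> w \<in> P"
  unfolding line3_def using line_subset by blast

lemma line3_distinct: "line3 u v w \<Longrightarrow> u \<noteq> v \<and> v \<noteq> w \<and> u \<noteq> w"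
  unfolding line3_def by blast

lemma line3_through_collinear:
  assumes "coll p q" "p \<noteq> q"
  shows "\<exists>w. line3 p q w"
proof -
  obtain l where "l \<in> L" "p \<in> l" "q \<in> l"
    using assms(1) unfolding collinear_def by blast
  then obtain v w where "l = {p, v, w}" "line3 p v w"
    using line_through_point by blast
  with \<open>q \<in> l\<close> assms(2) show ?thesis
    using line3_perms(2) by blast
qed

lemma ex_collinear_on_line:
  assumes "x \<in> P" "l \<in> L" "x \<notin> l"
  shows "\<exists>y\<in>l. coll x y"
proof -
  have "card {y\<in>l. coll x y} = 1"
    using assms card_collinear_on_line by blast
  then have "{y\<in>l. coll x y} \<noteq> {}"
    by (metis card.empty zero_neq_one)
  then show ?thesis
    by blast
qed

lemma collinear_with_line3:
  assumes "line3 u v w" "p \<in> P"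
  shows "coll p u \<or> coll p v \<or> coll p w"
proof (cases "p \<in> {u, v, w}")
  case True
  then show ?thesis
    using assms(2) collinear_refl by blast
next
  case False
  then show ?thesis
    using assms ex_collinear_on_line[of p "{u, v, w}"] unfolding line3_def by blast
qed

lemma line3_third_if_collinear:
  assumes "line3 u v w" "coll p u" "coll p v" "p \<noteq> u" "p \<noteq> v"
  shows "p = w"
proof (rule ccontr)
  assume "p \<noteq> w"
  have "p \<in> P"
    using assms(2) collinear_in_P by blast
  then have "card {y\<in>{u, v, w}. coll p y} = 1"
    using assms \<open>p \<noteq> w\<close> card_collinear_on_line unfolding line3_def by blast
  moreover have "{u, v} \<subseteq> {y\<in>{u, v, w}. coll p y}"
    using assms by blast
  then have "card {u, v} \<le> card {y\<in>{u, v, w}. coll p y}"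
    by (intro card_mono) auto
  ultimately show False
    using assms(1) line3_distinct by simp
qed

lemma not_collinear_third:
  assumes "line3 u v w" "coll p u" "p \<noteq> u" "\<not> coll p v"
  shows "\<not> coll p w"
proof
  assume "coll p w"
  moreover have "p \<noteq> w"
    using assms(1,4) line3_collinear by blast
  ultimately have "p = v"
    using line3_third_if_collinear[OF line3_perms(2)[OF assms(1)]] assms(2,3) by blast
  then show False
    using assms(2,4) collinear_in_P collinear_refl by blast
qed

lemma one_le_t:
  assumes "x \<in> P"
  shows "1 \<le> t"
proof -
  obtain y where "y \<in> P" "\<not> coll x y"
    using assms ex_not_collinear by blast
  moreover obtain l where l: "l \<in> L" "y \<in> l"
    using \<open>y \<in> P\<close> ex_line_through by blast
  ultimately have "x \<notin> l"
    using collinear_if_on_line by blast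
  then obtain z where z: "z \<in> l" "coll x z"
    using assms l ex_collinear_on_line by blast
  then obtain m where m: "m \<in> L" "x \<in> m" "z \<in> m"
    unfolding collinear_def by blast
  have "m \<noteq> l"
    using m(2) \<open>x \<notin> l\<close> by blast
  have "z \<in> P"
    using z(2) collinear_in_P by blast
  have "card {l, m} \<le> card {l'\<in>L. z \<in> l'}"
    using finite_lines_through[OF \<open>z \<in> P\<close>] l m z by (intro card_mono) auto
  then show ?thesis
    using card_lines_through[OF \<open>z \<in> P\<close>] \<open>m \<noteq> l\<close> by simp
qed

lemma two_lines_through:
  assumes "x \<in> P"
  obtains l l' where "l \<in> L" "l' \<in> L" "x \<in> l" "x \<in> l'" "l \<noteq> l'"
proof -
  have "\<not> card {l\<in>L. x \<in> l} \<le> Suc 0"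
    using card_lines_through[OF assms] one_le_t[OF assms] by simp
  then show ?thesis
    using that finite_lines_through[OF assms] card_le_Suc0_iff_eq by blast
qed

lemma two_common_neighbours:
  assumes "a \<in> P" "b \<in> P" "\<not> coll a b"
  obtains c d where "c \<noteq> d" "coll a c" "coll b c" "coll a d" "coll b d"
    "c \<noteq> a" "c \<noteq> b" "d \<noteq> a" "d \<noteq> b"
proof -
  obtain l l' where l: "l \<in> L" "l' \<in> L" "a \<in> l" "a \<in> l'" "l \<noteq> l'"
    using assms(1) two_lines_through by blast
  have "b \<notin> l" "b \<notin> l'"
    using l assms(3) collinear_if_on_line by blast+
  then obtain c d where c: "c \<in> l" "coll b c" and d: "d \<in> l'" "coll b d"
    using assms(2) l ex_collinear_on_line by meson
  have "coll a c" "coll a d"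
    using c d l collinear_if_on_line by blast+
  moreover have "c \<noteq> a" "d \<noteq> a" "c \<noteq> b" "d \<noteq> b"
    using assms(3) c d \<open>coll a c\<close> \<open>coll a d\<close> collinear_sym by metis+
  moreover have "c \<noteq> d"
    using c d l line_unique \<open>c \<noteq> a\<close> by blast
  ultimately show ?thesis
    using that c d by blast
qed

lemma common_neighbours_not_collinear:
  assumes "\<not> coll a b" "coll a c" "coll b c" "coll a d" "coll b d" "c \<noteq> d"
    "c \<noteq> a" "c \<noteq> b" "d \<noteq> a" "d \<noteq> b"
  shows "\<not> coll c d"
proof
  assume "coll c d"
  then obtain f where f: "line3 c d f"
    using assms(6) line3_through_collinear by blast
  have "a = f" "b = f"
    using line3_third_if_collinear[OF f] assms collinear_sym by metis+
  then show False
    using assms(1,2) collinear_in_P collinear_refl by metis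
qed

lemma third_points_not_collinear:
  assumes "line3 a c a'" "line3 b c b'" "\<not> coll a b"
  shows "\<not> coll a' b'"
proof -
  have "b \<noteq> c"
    using assms(1,3) line3_collinear by blast
  then have "\<not> coll b a'"
    using not_collinear_third[OF line3_perms(1)[OF assms(1)]] assms line3_collinear
    by (metis collinear_sym)
  moreover have "a' \<noteq> c"
    using assms(1) line3_distinct by blast
  ultimately show ?thesis
    using not_collinear_third[OF line3_perms(1)[OF assms(2)]] assms(1) line3_collinear
    by (metis collinear_sym)
qed

lemma third_points_concurrent:
  assumes "\<not> coll a b" "\<not> coll c d"
    and a1: "line3 a c a1" and b1: "line3 b c b1" and a2: "line3 a d a2" and b2: "line3 b d b2"
  obtains e where "line3 a2 b1 e" "line3 a1 b2 e"
proof -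
  note lines = a1 b1 a2 b2
  have "\<not> coll b a1" "\<not> coll d a1" "\<not> coll b a2" "\<not> coll c a2" "\<not> coll d b1"
    using not_collinear_third[OF line3_perms(1)[OF a1], of b]
      not_collinear_third[OF a1, of d] not_collinear_third[OF line3_perms(1)[OF a2], of b]
      not_collinear_third[OF a2, of c] not_collinear_third[OF b1, of d]
      assms(1,2) lines[THEN line3_collinear(1)] lines[THEN line3_distinct] collinear_sym by metis+
  have "coll a2 b1"
    using collinear_with_line3[OF b1] line3_in_P[OF a2] \<open>\<not> coll b a2\<close> \<open>\<not> coll c a2\<close>
      collinear_sym by metis
  moreover have "a2 \<noteq> b1"
    using \<open>\<not> coll c a2\<close> line3_collinear(5)[OF b1] by blast
  ultimately obtain e where e: "line3 a2 b1 e"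
    using line3_through_collinear by blast
  have "\<not> coll d e" "\<not> coll b e" "\<not> coll c e"
    using not_collinear_third[OF e, of d] not_collinear_third[OF line3_perms(1)[OF e], of b]
      not_collinear_third[OF line3_perms(1)[OF e], of c]
      line3_collinear[OF a2] line3_collinear[OF b1] line3_distinct[OF a2] line3_distinct[OF b1]
      \<open>\<not> coll d b1\<close> \<open>\<not> coll b a2\<close> \<open>\<not> coll c a2\<close>
    by metis+
  moreover have "\<not> coll e a"
    using not_collinear_third[OF line3_perms(3)[OF a2], of e] line3_collinear[OF e]
      line3_distinct[OF e] \<open>\<not> coll d e\<close> collinear_sym by metis
  ultimately have "coll e a1" "coll e b2"
    using collinear_with_line3[OF a1] collinear_with_line3[OF b2] line3_in_P[OF e]
      collinear_sym by metis+
  moreover have "coll a1 b2" "a1 \<noteq> b2"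
    using collinear_with_line3[OF b2] line3_in_P[OF a1] \<open>\<not> coll b a1\<close> \<open>\<not> coll d a1\<close>
      line3_collinear(5)[OF b2] collinear_sym by metis+
  moreover have "e \<noteq> a1" "e \<noteq> b2"
    using \<open>\<not> coll c e\<close> \<open>\<not> coll d e\<close> line3_collinear(5)[OF a1] line3_collinear(5)[OF b2]
    by blast+
  ultimately have "line3 a1 b2 e"
    using line3_through_collinear line3_third_if_collinear by metis
  with e show ?thesis
    using that by blast
qed

lemma card_collinear_not_collinear:
  assumes "a \<in> P" "b \<in> P" "\<not> coll a b"
  shows "card {x\<in>P. x \<noteq> b \<and> coll b x \<and> \<not> coll a x} = t + 1"
proof -
  define S where "S l = {x\<in>l. x \<noteq> b \<and> \<not> coll a x}" for l
  have union: "{x\<in>P. x \<noteq> b \<and> coll b x \<and> \<not> coll a x} = (\<Union>l\<in>{l\<in>L. b \<in> l}. S l)"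
    unfolding S_def collinear_def using line_subset by blast
  \<comment> \<open>Of the two points of l other than b, exactly one is collinear with a.\<close>
  have card_S: "card (S l) = 1" if "l \<in> L" "b \<in> l" for l
  proof -
    have "a \<notin> l"
      using that assms(3) collinear_if_on_line by blast
    then have "card {y\<in>l. coll a y} = 1"
      using assms(1) that(1) card_collinear_on_line by blast
    moreover have "S l = (l - {b}) - {y\<in>l. coll a y}"
      unfolding S_def by blast
    moreover have "{y\<in>l. coll a y} \<subseteq> l - {b}"
      using assms(3) by blast
    moreover have "card (l - {b}) = 2"
      using that card_line finite_line by simp
    ultimately show ?thesis
      using finite_line[OF that(1)] by (simp add: card_Diff_subset)
  qed
  have "card (\<Union>l\<in>{l\<in>L. b \<in> l}. S l) = (\<Sum>l\<in>{l\<in>L. b \<in> l}. card (S l))"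
  proof (rule card_UN_disjoint)
    show "finite {l\<in>L. b \<in> l}"
      using assms(2) finite_lines_through by blast
    show "\<forall>l\<in>{l\<in>L. b \<in> l}. finite (S l)"
      unfolding S_def using finite_line by simp
    show "\<forall>l\<in>{l\<in>L. b \<in> l}. \<forall>l'\<in>{l\<in>L. b \<in> l}. l \<noteq> l' \<longrightarrow> S l \<inter> S l' = {}"
      unfolding S_def using line_unique by blast
  qed
  also have "\<dots> = t + 1"
    using card_S card_lines_through[OF assms(2)] by simp
  finally show ?thesis
    using union by simp
qed

end

locale gq2_representation = gq2 P L t for P :: "'p set" and L and t +
  fixes G :: "('g, 'b) monoid_scheme" (structure) and r :: "'p \<Rightarrow> 'g"
  assumes faithful: "faithful_representation P L G r"
begin

sublocale group G
  using faithful unfolding faithful_representation_def representation_def by blast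

lemma r_in_carrier: "p \<in> P \<Longrightarrow> r p \<in> carrier G"
  and generate_r: "generate G (r ` P) = carrier G"
  and klein_four_line: "l \<in> L \<Longrightarrow> klein_four_subgroup G (insert \<one> (r ` l))"
  using faithful unfolding faithful_representation_def representation_def by blast+

lemma r_eq_iff: "p \<in> P \<Longrightarrow> q \<in> P \<Longrightarrow> r p = r q \<longleftrightarrow> p = q"
  using faithful unfolding faithful_representation_def inj_on_def rep_psi_def by metis

lemma r_line3:
  assumes "line3 u v w"
  shows "r u \<otimes> r v = r w"
proof -
  let ?K = "{\<one>, r u, r v, r w}"
  have "klein_four_subgroup G ?K"
    using klein_four_line[of "{u, v, w}"] assms unfolding line3_def by simp
  then have K: "subgroup ?K G" "card ?K = 4" "\<And>h. h \<in> ?K \<Longrightarrow> h \<otimes> h = \<one>"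
    unfolding klein_four_subgroup_def by blast+
  have "distinct [\<one>, r u, r v, r w]"
    using K(2) card_distinct[of "[\<one>, r u, r v, r w]"] by simp
  moreover have carrier: "r u \<in> carrier G" "r v \<in> carrier G"
    using assms line3_in_P r_in_carrier by blast+
  moreover have "r u \<otimes> r v \<noteq> r u \<otimes> r u"
    using calculation by auto
  moreover have "r u \<otimes> r v \<in> ?K"
    using subgroup.m_closed[OF K(1)] by simp
  ultimately show ?thesis
    using K(3)[of "r u"] by auto
qed

lemma r_self: "p \<in> P \<Longrightarrow> r p \<otimes> r p = \<one>"
  using klein_four_line ex_line_through unfolding klein_four_subgroup_def by blast

lemma r_commute_collinear:
  assumes "coll p q"
  shows "r p \<otimes> r q = r q \<otimes> r p"
proof (cases "p = q")
  case False
  then obtain w where "line3 p q w"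
    using assms line3_through_collinear by blast
  then show ?thesis
    using r_line3 line3_perms(1) by metis
qed simp

lemma r_commute_not_collinear:
  assumes "a \<in> P" "b \<in> P" "\<not> coll a b"
  shows "r a \<otimes> r b = r b \<otimes> r a"
proof -
  obtain c d where cd: "c \<noteq> d" "coll a c" "coll b c" "coll a d" "coll b d"
    "c \<noteq> a" "c \<noteq> b" "d \<noteq> a" "d \<noteq> b"
    using assms two_common_neighbours by blast
  then have "\<not> coll c d"
    using assms(3) common_neighbours_not_collinear by blast
  obtain a1 b1 a2 b2 where
    lines: "line3 a c a1" "line3 b c b1" "line3 a d a2" "line3 b d b2"
    using cd line3_through_collinear by metis
  then obtain e where "line3 a2 b1 e" "line3 a1 b2 e"
    using assms(3) \<open>\<not> coll c d\<close> third_points_concurrent by blast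
  then have "r a2 \<otimes> r b1 = r a1 \<otimes> r b2" "r a2 \<otimes> r b1 = r b1 \<otimes> r a2"
    using r_line3 line3_perms(1) by metis+
  then show ?thesis
    unfolding lines[THEN r_line3, symmetric]
    using commute_from_products[of "r a" "r b" "r c" "r d"] assms cd collinear_in_P r_in_carrier
      r_commute_collinear by metis
qed

sublocale comm_group G
  using comm_group_if_generators_commute[OF generate_r] r_in_carrier r_commute_collinear
    r_commute_not_collinear by blast

lemma r_self_left: "p \<in> P \<Longrightarrow> x \<in> carrier G \<Longrightarrow> r p \<otimes> (r p \<otimes> x) = x"
  by (simp add: m_assoc [symmetric] r_self r_in_carrier)

text \<open>Rewriting with this rule and \<open>m_ac\<close> turns every rearrangement of a relation
  among four generators into the same normal form.\<close>

lemma r_prod_eq_iff: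
  assumes "{a, b, x, y} \<subseteq> P"
  shows "r a \<otimes> r b = r x \<otimes> r y \<longleftrightarrow> r a \<otimes> r b \<otimes> r x \<otimes> r y = \<one>"
proof
  assume "r a \<otimes> r b = r x \<otimes> r y"
  then have "r a \<otimes> r b \<otimes> r x \<otimes> r y = r x \<otimes> r y \<otimes> r x \<otimes> r y"
    by simp
  also have "\<dots> = \<one>"
    using assms by (simp add: m_ac r_self r_self_left r_in_carrier)
  finally show "r a \<otimes> r b \<otimes> r x \<otimes> r y = \<one>" .
next
  assume prod: "r a \<otimes> r b \<otimes> r x \<otimes> r y = \<one>"
  have "r a \<otimes> r b = (r a \<otimes> r b \<otimes> r x \<otimes> r y) \<otimes> (r x \<otimes> r y)"
    using assms by (simp add: m_ac r_self r_self_left r_in_carrier)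
  then show "r a \<otimes> r b = r x \<otimes> r y"
    using assms prod by (simp add: r_in_carrier)
qed

lemma r_third_points:
  assumes "line3 a c a'" "line3 b c b'"
  shows "r a' \<otimes> r b' = r a \<otimes> r b"
  unfolding r_line3[OF assms(1), symmetric] r_line3[OF assms(2), symmetric]
  using line3_in_P[OF assms(1)] line3_in_P[OF assms(2)]
  by (simp add: m_ac r_self r_self_left r_in_carrier)

lemma product_eq_collinear_pair:
  assumes "{p, q, u, v} \<subseteq> P" "r p \<otimes> r q = r u \<otimes> r v"
    and "coll u v" "u \<noteq> v" "\<not> coll q u" "\<not> coll q v"
  shows "coll p q"
proof -
  obtain z where z: "line3 u v z"
    using assms(3,4) line3_through_collinear by blast
  have "coll q z"
    using collinear_with_line3[OF z] assms(1,5,6) by blast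
  moreover have "q \<noteq> z"
    using assms(5) line3_collinear(4)[OF z] by blast
  ultimately obtain w where w: "line3 q z w"
    using line3_through_collinear by blast
  have "r w = r q \<otimes> (r p \<otimes> r q)"
    using r_line3[OF w] r_line3[OF z] assms(2) by simp
  also have "\<dots> = r p"
    using assms(1) by (simp add: m_ac r_self r_in_carrier)
  finally have "w = p"
    using assms(1) line3_in_P[OF w] r_eq_iff by blast
  then show ?thesis
    using line3_collinear(4)[OF w] by simp
qed

text \<open>Read additively over GF(2), the relation says that the generators of the four
  points are linearly dependent.\<close>

definition dependent_quad :: "'p \<Rightarrow> 'p \<Rightarrow> 'p \<Rightarrow> 'p \<Rightarrow> bool" where
  "dependent_quad a b x y \<longleftrightarrow> {a, b, x, y} \<subseteq> P \<and>
     \<not> coll a b \<and> \<not> coll a x \<and> \<not> coll a y \<and> \<not> coll b x \<and> \<not> coll b y \<and> \<not> coll x y \<and>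
     r a \<otimes> r b = r x \<otimes> r y"

lemma dependent_quad_swap: "dependent_quad a b x y \<Longrightarrow> dependent_quad a b y x"
  unfolding dependent_quad_def using collinear_sym r_in_carrier m_comm by (simp add: insert_commute)

lemma third_point_eq_if_product_eq:
  assumes "line3 p q w" "line3 u v m" "r p \<otimes> r q = r u \<otimes> r v"
  shows "w = m"
  using assms r_line3 r_eq_iff line3_in_P by metis

lemma dependent_quad_common_neighbour_disj:
  assumes quad: "dependent_quad a b x y" and c: "coll c a" "coll c b" "c \<noteq> a" "c \<noteq> b"
  shows "coll c x \<or> coll c y"
proof (rule ccontr)
  assume "\<not> (coll c x \<or> coll c y)"
  from quad have in_P: "a \<in> P" "b \<in> P" "x \<in> P" "y \<in> P"
    and nc: "\<not> coll x a" "\<not> coll x b" "\<not> coll y b" "\<not> coll x y"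
    and rel: "r a \<otimes> r b = r x \<otimes> r y"
    unfolding dependent_quad_def using collinear_sym by auto
  obtain a' b' where a': "line3 a c a'" and b': "line3 b c b'"
    using c line3_through_collinear collinear_sym by metis
  have "coll x a'" "coll x b'" "coll y b'"
    using collinear_with_line3[OF a'] collinear_with_line3[OF b'] in_P nc
      \<open>\<not> (coll c x \<or> coll c y)\<close> collinear_sym by metis+
  moreover have "x \<noteq> a'" "x \<noteq> b'" "y \<noteq> b'"
    using \<open>\<not> (coll c x \<or> coll c y)\<close> line3_collinear(5)[OF a'] line3_collinear(5)[OF b'] by blast+
  ultimately obtain w m where w: "line3 x a' w" and m: "line3 y b' m"
    using line3_through_collinear by metis
  have "r x \<otimes> r a' = r y \<otimes> r b'"
    using r_third_points[OF a' b'] rel in_P line3_in_P[OF a'] line3_in_P[OF b']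
    by (simp add: r_prod_eq_iff m_ac r_in_carrier)
  then have "coll x m"
    using third_point_eq_if_product_eq[OF w m] line3_collinear(3)[OF w] by simp
  moreover have "x \<noteq> m"
    using line3_collinear(3)[OF m] nc(4) collinear_sym by blast
  ultimately have "x = y"
    using line3_third_if_collinear[OF line3_perms(4)[OF m]] \<open>coll x b'\<close> \<open>x \<noteq> b'\<close> by blast
  then show False
    using nc(4) in_P collinear_refl by blast
qed

lemma dependent_quad_common_neighbour_transfer:
  assumes quad: "dependent_quad a b x y" and c: "coll c a" "coll c b" "c \<noteq> a" "c \<noteq> b"
    and "coll c y"
  shows "coll c x"
proof (rule ccontr)
  assume "\<not> coll c x"
  from quad have in_P: "a \<in> P" "b \<in> P" "x \<in> P" "y \<in> P"
    and nc: "\<not> coll x a" "\<not> coll y a" "\<not> coll y b" "\<not> coll x y"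
    and rel: "r a \<otimes> r b = r x \<otimes> r y"
    unfolding dependent_quad_def using collinear_sym by auto
  obtain a' b' where a': "line3 a c a'" and b': "line3 b c b'"
    using c line3_through_collinear collinear_sym by metis
  have "coll x a'" "x \<noteq> a'"
    using collinear_with_line3[OF a'] in_P nc \<open>\<not> coll c x\<close> line3_collinear(6)[OF a']
      collinear_sym by metis+
  have "y \<noteq> c"
    using nc(2) c(1) collinear_sym by blast
  then have "\<not> coll y a'" "\<not> coll y b'"
    using not_collinear_third[OF line3_perms(1)[OF a']] not_collinear_third[OF line3_perms(1)[OF b']]
      \<open>coll c y\<close> nc(2,3) collinear_sym by metis+
  moreover have "r b' \<otimes> r y = r x \<otimes> r a'"
    using r_third_points[OF a' b'] rel in_P line3_in_P[OF a'] line3_in_P[OF b']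
    by (simp add: r_prod_eq_iff m_ac r_in_carrier)
  ultimately have "coll b' y"
    using product_eq_collinear_pair \<open>coll x a'\<close> \<open>x \<noteq> a'\<close> nc(4) in_P line3_in_P[OF a']
      line3_in_P[OF b'] collinear_sym
    by (metis empty_subsetI insert_subset)
  then show False
    using \<open>\<not> coll y b'\<close> collinear_sym by blast
qed

lemma dependent_quad_common_neighbour:
  assumes "dependent_quad a b x y" "coll c a" "coll c b" "c \<noteq> a" "c \<noteq> b"
  shows "coll c x"
  using dependent_quad_common_neighbour_disj[OF assms]
    dependent_quad_common_neighbour_transfer[OF assms] by blast

lemma dependent_quad_third_points:
  assumes quad: "dependent_quad a b x y"
    and lines: "line3 a c a'" "line3 b c b'" and c: "coll c x" "coll c y"
  shows "dependent_quad a' b' x y"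
proof -
  from quad have "{a, b, x, y} \<subseteq> P" "\<not> coll a b" "\<not> coll x y"
    and nc: "\<not> coll x a" "\<not> coll x b" "\<not> coll y a" "\<not> coll y b"
    and rel: "r a \<otimes> r b = r x \<otimes> r y"
    unfolding dependent_quad_def using collinear_sym by auto
  moreover have "x \<noteq> c" "y \<noteq> c"
    using nc(1,3) lines(1) line3_collinear by blast+
  then have "\<not> coll x a'" "\<not> coll x b'" "\<not> coll y a'" "\<not> coll y b'"
    using not_collinear_third[OF line3_perms(1)[OF lines(1)]]
      not_collinear_third[OF line3_perms(1)[OF lines(2)]] c nc collinear_sym by metis+
  moreover have "\<not> coll a' b'"
    using third_points_not_collinear lines calculation(2) by blast
  moreover have "a' \<in> P" "b' \<in> P"
    using lines line3_in_P by blast+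
  ultimately show ?thesis
    unfolding dependent_quad_def using r_third_points[OF lines] collinear_sym by auto
qed

lemma dependent_quad_second_pair_neighbour:
  assumes quad: "dependent_quad a b x y"
  obtains e where "coll e x" "coll e y" "\<not> coll a e" "\<not> coll b e"
proof -
  from quad have "a \<in> P" "b \<in> P" "\<not> coll a b" "\<not> coll a x" "\<not> coll b x"
    unfolding dependent_quad_def by auto
  then obtain c where c: "coll a c" "coll b c" "c \<noteq> a" "c \<noteq> b"
    using two_common_neighbours by metis
  then have "coll c x" "coll c y"
    using dependent_quad_common_neighbour quad dependent_quad_swap collinear_sym by metis+
  obtain a' b' where a': "line3 a c a'" and b': "line3 b c b'"
    using c line3_through_collinear by metis
  have quad': "dependent_quad a' b' x y"
    using dependent_quad_third_points[OF quad a' b'] \<open>coll c x\<close> \<open>coll c y\<close> .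
  then have "a' \<in> P" "b' \<in> P" "\<not> coll a' b'"
    unfolding dependent_quad_def by auto
  then obtain e where e: "coll a' e" "coll b' e" "e \<noteq> a'" "e \<noteq> b'" "e \<noteq> c"
    using two_common_neighbours by metis
  then have "coll e x" "coll e y"
    using dependent_quad_common_neighbour quad' dependent_quad_swap collinear_sym by metis+
  moreover have "e \<noteq> a" "e \<noteq> b"
    using \<open>coll e x\<close> \<open>\<not> coll a x\<close> \<open>\<not> coll b x\<close> by blast+
  then have "\<not> coll a e" "\<not> coll b e"
    using line3_third_if_collinear[OF line3_perms(2)[OF a'], of e]
      line3_third_if_collinear[OF line3_perms(2)[OF b'], of e] e collinear_sym by metis+
  ultimately show ?thesis
    using that by blast
qed

lemma no_dependent_quad: "\<not> dependent_quad a b x y"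
proof
  assume quad: "dependent_quad a b x y"
  then have in_P: "a \<in> P" "b \<in> P" "x \<in> P" "y \<in> P"
    and nc: "\<not> coll a x" "\<not> coll b x" "\<not> coll x y"
    unfolding dependent_quad_def by auto
  obtain e where e: "coll e x" "coll e y" "\<not> coll a e" "\<not> coll b e"
    using dependent_quad_second_pair_neighbour[OF quad] .
  have "x \<noteq> e"
    using e(2) nc(3) by blast
  then obtain f where f: "line3 x e f"
    using e(1) line3_through_collinear collinear_sym by metis
  then have "coll f a" "coll f b"
    using collinear_with_line3[OF f] in_P nc(1,2) e(3,4) collinear_sym by metis+
  moreover have "f \<noteq> a" "f \<noteq> b"
    using line3_collinear(4)[OF f] nc(1,2) collinear_sym by metis+
  ultimately have "coll f y"
    using dependent_quad_common_neighbour[OF dependent_quad_swap[OF quad]] by blast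
  moreover have "y \<noteq> e" "y \<noteq> f"
    using e(1) line3_collinear(4)[OF f] nc(3) collinear_sym by metis+
  ultimately have "y = x"
    using line3_third_if_collinear[OF line3_perms(4)[OF f]] e(2) collinear_sym by metis
  then show False
    using nc(3) in_P collinear_refl by blast
qed

lemma collinear_if_product_eq:
  assumes "a \<in> P" "b \<in> P" "x \<in> P" "y \<in> P" "\<not> coll a b" "\<not> coll a x" "\<not> coll b y"
    and "r a \<otimes> r x = r b \<otimes> r y"
  shows "coll b x"
proof (rule ccontr)
  assume "\<not> coll b x"
  have rel: "r a \<otimes> r b = r x \<otimes> r y" and rel': "r x \<otimes> r b = r a \<otimes> r y"
    using assms by (simp_all add: r_prod_eq_iff m_ac r_in_carrier)
  have "x \<noteq> y"
    using assms r_eq_iff r_in_carrier collinear_refl by force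
  then have "\<not> coll x y"
    using product_eq_collinear_pair[OF _ rel] assms \<open>\<not> coll b x\<close> collinear_sym by blast
  have "a \<noteq> y"
    using assms \<open>\<not> coll b x\<close> r_eq_iff r_in_carrier collinear_refl m_comm by force
  then have "\<not> coll a y"
    using product_eq_collinear_pair[OF _ rel'] assms \<open>\<not> coll b x\<close> collinear_sym by blast
  then have "dependent_quad a b x y"
    unfolding dependent_quad_def using assms rel \<open>\<not> coll b x\<close> \<open>\<not> coll x y\<close> by blast
  then show False
    using no_dependent_quad by blast
qed

lemma ex_product_eq_if_collinear:
  assumes "a \<in> P" "b \<in> P" "x \<in> P" "\<not> coll a b" "\<not> coll a x" "coll b x"
  shows "\<exists>y\<in>P. \<not> coll b y \<and> r a \<otimes> r x = r b \<otimes> r y"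
proof (cases "x = b")
  case True
  then show ?thesis
    using assms collinear_sym m_comm r_in_carrier by metis
next
  case False
  then obtain c where c: "line3 b x c"
    using assms(6) line3_through_collinear by blast
  then have "coll a c"
    using collinear_with_line3 assms by blast
  moreover have "a \<noteq> c"
    using assms(4) line3_collinear(4)[OF c] collinear_sym by blast
  ultimately obtain y where y: "line3 a c y"
    using line3_through_collinear by blast
  have "b \<noteq> c"
    using c line3_distinct by blast
  then have "\<not> coll b y"
    using not_collinear_third[OF line3_perms(1)[OF y]] line3_collinear(3)[OF c] assms(4)
      collinear_sym by blast
  moreover have "r b \<otimes> r y = r b \<otimes> (r a \<otimes> (r b \<otimes> r x))"
    using r_line3[OF c] r_line3[OF y] by simp
  moreover have "\<dots> = r a \<otimes> r x"
    using assms by (simp add: m_ac r_self_left r_in_carrier)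
  ultimately show ?thesis
    using line3_in_P[OF y] by metis
qed

lemma common_products:
  assumes "a \<in> P" "b \<in> P" "\<not> coll a b"
  shows "{r a \<otimes> r x | x. x \<in> P \<and> x \<noteq> a \<and> \<not> coll a x}
           \<inter> {r b \<otimes> r x | x. x \<in> P \<and> x \<noteq> b \<and> \<not> coll b x}
         = (\<lambda>x. r a \<otimes> r x) ` {x\<in>P. coll b x \<and> \<not> coll a x}"
proof (intro equalityI subsetI)
  fix g
  assume "g \<in> {r a \<otimes> r x | x. x \<in> P \<and> x \<noteq> a \<and> \<not> coll a x}
            \<inter> {r b \<otimes> r x | x. x \<in> P \<and> x \<noteq> b \<and> \<not> coll b x}"
  then obtain x y where x: "g = r a \<otimes> r x" "x \<in> P" "\<not> coll a x"
    and y: "g = r b \<otimes> r y" "y \<in> P" "\<not> coll b y"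
    by blast
  then have "coll b x"
    using collinear_if_product_eq assms by metis
  then show "g \<in> (\<lambda>x. r a \<otimes> r x) ` {x\<in>P. coll b x \<and> \<not> coll a x}"
    using x by blast
next
  fix g
  assume "g \<in> (\<lambda>x. r a \<otimes> r x) ` {x\<in>P. coll b x \<and> \<not> coll a x}"
  then obtain x where x: "g = r a \<otimes> r x" "x \<in> P" "coll b x" "\<not> coll a x"
    by blast
  then obtain y where "y \<in> P" "\<not> coll b y" "g = r b \<otimes> r y"
    using ex_product_eq_if_collinear assms by metis
  moreover have "x \<noteq> a" "y \<noteq> b"
    using x assms \<open>\<not> coll b y\<close> collinear_refl by blast+
  ultimately show "g \<in> {r a \<otimes> r x | x. x \<in> P \<and> x \<noteq> a \<and> \<not> coll a x}
                    \<inter> {r b \<otimes> r x | x. x \<in> P \<and> x \<noteq> b \<and> \<not> coll b x}"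
    using x by blast
qed

end

theorem lemma3p8:
  fixes P :: "'p set" and L :: "'p set set" and t :: nat
    and G :: "('g, 'b) monoid_scheme" and r :: "'p \<Rightarrow> 'g"
    and a b :: 'p
  assumes "finite P"
    and "gen_quadrangle_2 P L t"
    and "faithful_representation P L G r"
    and "a \<in> P" and "b \<in> P" and "a \<noteq> b" and "\<not> collinear L a b"
  shows "card ({r a \<otimes>\<^bsub>G\<^esub> r x | x. x \<in> P \<and> x \<noteq> a \<and> \<not> collinear L a x}
            \<inter> {r b \<otimes>\<^bsub>G\<^esub> r x | x. x \<in> P \<and> x \<noteq> b \<and> \<not> collinear L b x}) = t + 2"
proof -
  interpret gq2_representation P L t G r
    using assms(2,3) by unfold_locales
  let ?X = "{x\<in>P. collinear L b x \<and> \<not> collinear L a x}"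
  let ?X' = "{x\<in>P. x \<noteq> b \<and> collinear L b x \<and> \<not> collinear L a x}"
  have "card ?X' = t + 1"
    by (rule card_collinear_not_collinear[OF assms(4,5,7)])
  then have "finite ?X'"
    by (intro card_ge_0_finite) simp
  moreover have "?X = insert b ?X'"
    using assms(5,7) collinear_refl collinear_sym by auto
  ultimately have "card ?X = t + 2"
    using \<open>card ?X' = t + 1\<close> by simp
  moreover have "inj_on (\<lambda>x. r a \<otimes>\<^bsub>G\<^esub> r x) ?X"
    using assms(4) r_eq_iff r_in_carrier by (simp add: inj_on_def)
  ultimately show ?thesis
    unfolding common_products[OF assms(4,5,7)] by (simp add: card_image)
qed

end
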